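(* Let $K$ be a commutative unital ring and let $A\in M_n(K)$ be block triangular with associated partition $A=(A_{ij})_{i,j=1}^q$. If $\lambda\in K$ is an eigenvalue of $A$, then $\lambda$ is an eigenvalue of $A_{ii}$ for some $1\le i\le q$.
   Context: $A$ is block lower triangular if there is a partition $A=(A_{ij})_{i,j=1}^q$, $q>1$, with square diagonal blocks $A_{ii}$ and $A_{ij}=0$ for $i<j$; block upper triangular if $A^T$ is block lower triangular (with the transposed partition); block triangular if either. $\lambda\in K$ is an eigenvalue of a square matrix $B$ if $Bv=\lambda v$ for some nonzero column vector $v$ over $K$; equivalently, $\det(\lambda I-B)$ is a zero divisor of $K$ (an element $u$ with $uw=0$ for some $w\ne0$). *)

theory Defs
  imports "Jordan_Normal_Form.Char_Poly"
begin

text \<open>A block partition of an n x n matrix is given by the list ns of the (positive)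
  sizes of the diagonal blocks; block i occupies the index range
  block_start ns i ..< block_start ns i + ns!i.\<close>

definition block_start :: "nat list \<Rightarrow> nat \<Rightarrow> nat" where
  "block_start ns i = sum_list (take i ns)"

definition block_partition :: "nat \<Rightarrow> nat list \<Rightarrow> bool" where
  "block_partition n ns \<longleftrightarrow> length ns > 1 \<and> (\<forall>i<length ns. ns ! i > 0) \<and> sum_list ns = n"

definition block :: "'a mat \<Rightarrow> nat list \<Rightarrow> nat \<Rightarrow> nat \<Rightarrow> 'a mat" where
  "block A ns i j = mat (ns ! i) (ns ! j)
     (\<lambda>(r, c). A $$ (block_start ns i + r, block_start ns j + c))"

definition block_lower_triangular_wrt :: "'a::zero mat \<Rightarrow> nat list \<Rightarrow> bool" where
  "block_lower_triangular_wrt A ns \<longleftrightarrow>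
     block_partition (dim_row A) ns \<and> A \<in> carrier_mat (dim_row A) (dim_row A) \<and>
     (\<forall>i j. i < j \<and> j < length ns \<longrightarrow> block A ns i j = 0\<^sub>m (ns ! i) (ns ! j))"

definition block_upper_triangular_wrt :: "'a::zero mat \<Rightarrow> nat list \<Rightarrow> bool" where
  "block_upper_triangular_wrt A ns \<longleftrightarrow> block_lower_triangular_wrt (transpose_mat A) ns"

definition block_triangular_wrt :: "'a::zero mat \<Rightarrow> nat list \<Rightarrow> bool" where
  "block_triangular_wrt A ns \<longleftrightarrow>
     block_lower_triangular_wrt A ns \<or> block_upper_triangular_wrt A ns"

end

theory Submission
  imports Defs
begin

text \<open>If \<open>A v = \<lambda> v\<close> with \<open>v \<noteq> 0\<close>, cut \<open>v\<close> into the pieces \<open>v\<^sub>j\<close> belonging to the blocks and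
  let \<open>i\<close> be the first block with \<open>v\<^sub>i \<noteq> 0\<close> (block lower triangular case) or the last one
  (block upper triangular case). Row block \<open>i\<close> of \<open>A v = \<lambda> v\<close> reads
  \<open>\<Sum>\<^sub>j A\<^sub>i\<^sub>j v\<^sub>j = \<lambda> v\<^sub>i\<close>, and every term with \<open>j \<noteq> i\<close> vanishes: either \<open>v\<^sub>j = 0\<close> by the choice
  of \<open>i\<close>, or \<open>A\<^sub>i\<^sub>j = 0\<close> by triangularity. Hence \<open>A\<^sub>i\<^sub>i v\<^sub>i = \<lambda> v\<^sub>i\<close> with \<open>v\<^sub>i \<noteq> 0\<close>.\<close>

lemma block_start_Cons_Suc: "block_start (a # ns) (Suc i) = a + block_start ns i"
  by (simp add: block_start_def)

lemma block_start_add_less_sum_list: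
  assumes "j < length ns" "r < ns ! j"
  shows "block_start ns j + r < sum_list ns"
proof -
  have "drop j ns = ns ! j # drop (Suc j) ns"
    using assms(1) by (simp add: Cons_nth_drop_Suc)
  then have "ns ! j \<le> sum_list (drop j ns)"
    by (metis le_add1 sum_list.Cons)
  then show ?thesis
    using assms(2) sum_list_append[of "take j ns" "drop j ns"] by (simp add: block_start_def)
qed

lemma ex_block_index:
  "k < sum_list ns \<Longrightarrow> \<exists>j<length ns. \<exists>r<ns ! j. k = block_start ns j + r"
proof (induction ns arbitrary: k)
  case Nil
  then show ?case by simp
next
  case (Cons a ns)
  show ?case
  proof (cases "k < a")
    case True
    then show ?thesis by (intro exI[of _ 0]) (simp add: block_start_def)
  next
    case False
    with Cons.prems have "k - a < sum_list ns" by simp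
    then obtain j r where "j < length ns" "r < ns ! j" "k - a = block_start ns j + r"
      using Cons.IH by blast
    with False show ?thesis
      by (intro exI[of _ "Suc j"]) (auto simp: block_start_Cons_Suc)
  qed
qed

lemma sum_lessThan_add:
  fixes f :: "nat \<Rightarrow> 'a::comm_monoid_add"
  shows "(\<Sum>c<a + b. f c) = (\<Sum>c<a. f c) + (\<Sum>c<b. f (a + c))"
proof -
  have "(\<Sum>c<a + b. f c) = (\<Sum>c\<in>{0..<a}. f c) + (\<Sum>c\<in>{a..<a + b}. f c)"
    by (simp add: sum.atLeastLessThan_concat flip: atLeast0LessThan)
  also have "(\<Sum>c\<in>{a..<a + b}. f c) = (\<Sum>c<b. f (a + c))"
    using sum.shift_bounds_nat_ivl[of f 0 a b] by (simp add: atLeast0LessThan add.commute)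
  finally show ?thesis by (simp add: atLeast0LessThan)
qed

lemma sum_lessThan_sum_list_blocks:
  "(\<Sum>c<sum_list ns. f c) = (\<Sum>j<length ns. \<Sum>r<ns ! j. f (block_start ns j + r))"
proof (induction ns arbitrary: f)
  case Nil
  then show ?case by simp
next
  case (Cons a ns)
  have "(\<Sum>c<sum_list (a # ns). f c) = (\<Sum>c<a. f c) + (\<Sum>c<sum_list ns. f (a + c))"
    by (simp add: sum_lessThan_add)
  also have "\<dots> = (\<Sum>c<a. f c) + (\<Sum>j<length ns. \<Sum>r<ns ! j. f (a + (block_start ns j + r)))"
    by (simp only: Cons.IH)
  also have "\<dots> = (\<Sum>j<length (a # ns). \<Sum>r<(a # ns) ! j. f (block_start (a # ns) j + r))"
    unfolding length_Cons sum.lessThan_Suc_shift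
    by (simp add: block_start_Cons_Suc add.assoc) (simp add: block_start_def)
  finally show ?case .
qed

definition block_vec :: "'a vec \<Rightarrow> nat list \<Rightarrow> nat \<Rightarrow> 'a vec" where
  "block_vec v ns j = vec (ns ! j) (\<lambda>r. v $ (block_start ns j + r))"

lemma dim_block [simp]:
  "dim_row (block A ns i j) = ns ! i" "dim_col (block A ns i j) = ns ! j"
  by (simp_all add: block_def)

lemma dim_block_vec [simp]: "dim_vec (block_vec v ns j) = ns ! j"
  by (simp add: block_vec_def)

lemma index_mult_mat_vec_blocks:
  assumes A: "A \<in> carrier_mat n n" and v: "v \<in> carrier_vec n" and n: "sum_list ns = n"
    and i: "i < length ns" and r: "r < ns ! i"
  shows "(A *\<^sub>v v) $ (block_start ns i + r) = (\<Sum>j<length ns. (block A ns i j *\<^sub>v block_vec v ns j) $ r)"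
proof -
  have "block_start ns i + r < n"
    using block_start_add_less_sum_list[OF i r] n by simp
  then have "(A *\<^sub>v v) $ (block_start ns i + r) = (\<Sum>c<n. A $$ (block_start ns i + r, c) * v $ c)"
    using A v by (simp add: scalar_prod_def atLeast0LessThan)
  also have "\<dots> = (\<Sum>j<length ns. \<Sum>c<ns ! j.
      A $$ (block_start ns i + r, block_start ns j + c) * v $ (block_start ns j + c))"
    unfolding n[symmetric] by (rule sum_lessThan_sum_list_blocks)
  also have "\<dots> = (\<Sum>j<length ns. (block A ns i j *\<^sub>v block_vec v ns j) $ r)"
    using r by (intro sum.cong) (simp_all add: block_def block_vec_def scalar_prod_def atLeast0LessThan)
  finally show ?thesis .
qed

definition block_support :: "'a::zero vec \<Rightarrow> nat list \<Rightarrow> nat set" where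
  "block_support v ns = {j. j < length ns \<and> block_vec v ns j \<noteq> 0\<^sub>v (ns ! j)}"

lemma finite_block_support [simp]: "finite (block_support v ns)"
  by (simp add: block_support_def)

lemma block_support_nonempty:
  assumes v: "v \<in> carrier_vec (sum_list ns)" and nonzero: "v \<noteq> 0\<^sub>v (sum_list ns)"
  shows "block_support v ns \<noteq> {}"
proof
  assume empty: "block_support v ns = {}"
  have "v = 0\<^sub>v (sum_list ns)"
  proof (rule eq_vecI)
    fix k
    assume k: "k < dim_vec (0\<^sub>v (sum_list ns) :: 'a vec)"
    then obtain j r where j: "j < length ns" and r: "r < ns ! j" and k_eq: "k = block_start ns j + r"
      using ex_block_index[of k ns] by auto
    have "v $ k = block_vec v ns j $ r"
      using r k_eq by (simp add: block_vec_def)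
    also have "\<dots> = 0"
      using empty j r by (simp add: block_support_def)
    finally show "v $ k = 0\<^sub>v (sum_list ns) $ k"
      using k by simp
  qed (use v in simp)
  with nonzero show False ..
qed

lemma eigenvalue_diagonal_block:
  assumes A: "A \<in> carrier_mat n n" and n: "sum_list ns = n" and ev: "eigenvector A v lam"
    and i: "i \<in> block_support v ns"
    and off_diag: "\<And>j. j \<in> block_support v ns \<Longrightarrow> j \<noteq> i \<Longrightarrow> block A ns i j = 0\<^sub>m (ns ! i) (ns ! j)"
  shows "eigenvalue (block A ns i i) lam"
proof -
  have v: "v \<in> carrier_vec n" and Av: "A *\<^sub>v v = lam \<cdot>\<^sub>v v"
    using ev A unfolding eigenvector_def by auto
  have i_less: "i < length ns" and vi: "block_vec v ns i \<noteq> 0\<^sub>v (ns ! i)"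
    using i by (simp_all add: block_support_def)
  have "block A ns i i *\<^sub>v block_vec v ns i = lam \<cdot>\<^sub>v block_vec v ns i"
  proof (rule eq_vecI)
    fix r
    assume "r < dim_vec (lam \<cdot>\<^sub>v block_vec v ns i)"
    then have r: "r < ns ! i" by simp
    have off_zero: "(block A ns i j *\<^sub>v block_vec v ns j) $ r = 0"
      if j: "j \<in> {..<length ns} - {i}" for j
    proof (cases "j \<in> block_support v ns")
      case True
      with j have zero: "block A ns i j = 0\<^sub>m (ns ! i) (ns ! j)" by (simp add: off_diag)
      show ?thesis unfolding zero using r by (simp add: carrier_vecI)
    next
      case False
      with j have zero: "block_vec v ns j = 0\<^sub>v (ns ! j)" by (simp add: block_support_def)
      show ?thesis unfolding zero using r row_carrier[of "block A ns i j" r] by simp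
    qed
    have "(A *\<^sub>v v) $ (block_start ns i + r)
        = (\<Sum>j<length ns. (block A ns i j *\<^sub>v block_vec v ns j) $ r)"
      by (rule index_mult_mat_vec_blocks[OF A v n i_less r])
    also have "\<dots> = (block A ns i i *\<^sub>v block_vec v ns i) $ r
          + (\<Sum>j\<in>{..<length ns} - {i}. (block A ns i j *\<^sub>v block_vec v ns j) $ r)"
      using i_less by (intro sum.remove) auto
    also have "(\<Sum>j\<in>{..<length ns} - {i}. (block A ns i j *\<^sub>v block_vec v ns j) $ r) = 0"
      using off_zero by (rule sum.neutral[OF ballI])
    finally have "(block A ns i i *\<^sub>v block_vec v ns i) $ r = (A *\<^sub>v v) $ (block_start ns i + r)"
      by simp
    also have "\<dots> = (lam \<cdot>\<^sub>v block_vec v ns i) $ r"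
      using Av v r block_start_add_less_sum_list[OF i_less r] n by (simp add: block_vec_def)
    finally show "(block A ns i i *\<^sub>v block_vec v ns i) $ r = (lam \<cdot>\<^sub>v block_vec v ns i) $ r" .
  qed simp
  then have "eigenvector (block A ns i i) (block_vec v ns i) lam"
    using vi unfolding eigenvector_def by (simp add: carrier_vecI)
  then show ?thesis unfolding eigenvalue_def by blast
qed

lemma eigenvalue_block_lower_triangular:
  assumes tri: "block_lower_triangular_wrt A ns" and ev: "eigenvalue A lam"
  shows "\<exists>i < length ns. eigenvalue (block A ns i i) lam"
proof -
  define n where "n = dim_row A"
  have A: "A \<in> carrier_mat n n" and n: "sum_list ns = n"
    and zero: "\<And>i j. i < j \<Longrightarrow> j < length ns \<Longrightarrow> block A ns i j = 0\<^sub>m (ns ! i) (ns ! j)"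
    using tri by (auto simp: block_lower_triangular_wrt_def block_partition_def n_def)
  obtain v where v: "eigenvector A v lam"
    using ev unfolding eigenvalue_def by blast
  define i where "i = Min (block_support v ns)"
  have "block_support v ns \<noteq> {}"
    using v A n by (intro block_support_nonempty) (auto simp: eigenvector_def)
  then have i: "i \<in> block_support v ns"
    by (simp add: i_def)
  have "eigenvalue (block A ns i i) lam"
  proof (rule eigenvalue_diagonal_block[OF A n v i])
    fix j assume j: "j \<in> block_support v ns" "j \<noteq> i"
    then have "i < j"
      using Min_le[OF finite_block_support j(1)] j(2) unfolding i_def by linarith
    with j(1) show "block A ns i j = 0\<^sub>m (ns ! i) (ns ! j)"
      by (intro zero) (simp_all add: block_support_def)
  qed
  with i show ?thesis
    by (auto simp: block_support_def)
qed

lemma block_transpose_mat: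
  assumes "A \<in> carrier_mat n n" "sum_list ns = n" "i < length ns" "j < length ns"
  shows "block (transpose_mat A) ns i j = transpose_mat (block A ns j i)"
  using assms block_start_add_less_sum_list[of i ns] block_start_add_less_sum_list[of j ns]
  by (auto simp: block_def)

lemma eigenvalue_block_upper_triangular:
  assumes tri: "block_upper_triangular_wrt A ns" and ev: "eigenvalue A lam"
  shows "\<exists>i < length ns. eigenvalue (block A ns i i) lam"
proof -
  define n where "n = dim_col A"
  have "block_lower_triangular_wrt (transpose_mat A) ns"
    using tri unfolding block_upper_triangular_wrt_def .
  then have "transpose_mat A \<in> carrier_mat n n" and n: "sum_list ns = n"
    and zero: "\<And>i j. i < j \<Longrightarrow> j < length ns \<Longrightarrow>
      block (transpose_mat A) ns i j = 0\<^sub>m (ns ! i) (ns ! j)"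
    by (simp_all add: block_lower_triangular_wrt_def block_partition_def n_def)
  then have A: "A \<in> carrier_mat n n"
    by simp
  obtain v where v: "eigenvector A v lam"
    using ev unfolding eigenvalue_def by blast
  define i where "i = Max (block_support v ns)"
  have "block_support v ns \<noteq> {}"
    using v A n by (intro block_support_nonempty) (auto simp: eigenvector_def)
  then have i: "i \<in> block_support v ns"
    by (simp add: i_def)
  have "eigenvalue (block A ns i i) lam"
  proof (rule eigenvalue_diagonal_block[OF A n v i])
    fix j assume j: "j \<in> block_support v ns" "j \<noteq> i"
    then have "j < i"
      using Max_ge[OF finite_block_support j(1)] j(2) unfolding i_def by linarith
    have i_less: "i < length ns" and j_less: "j < length ns"
      using i j(1) by (simp_all add: block_support_def)
    have "block A ns i j = transpose_mat (block (transpose_mat A) ns j i)"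
      using block_transpose_mat[OF A n j_less i_less] by simp
    also have "\<dots> = 0\<^sub>m (ns ! i) (ns ! j)"
      using zero[OF \<open>j < i\<close> i_less] by simp
    finally show "block A ns i j = 0\<^sub>m (ns ! i) (ns ! j)" .
  qed
  with i show ?thesis
    by (auto simp: block_support_def)
qed

theorem lemma2p3:
  fixes A :: "'a::comm_ring_1 mat" and ns :: "nat list" and n :: nat and lam :: 'a
  assumes "A \<in> carrier_mat n n"
    and "block_triangular_wrt A ns"
    and "eigenvalue A lam"
  shows "\<exists>i < length ns. eigenvalue (block A ns i i) lam"
  using assms(2,3) eigenvalue_block_lower_triangular eigenvalue_block_upper_triangular
  unfolding block_triangular_wrt_def by blast

end
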